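(* Let $n_1,\dots,n_m$ be positive integers, $n=n_1+\cdots+n_m$, let $\tau$ be a smooth $k$-representation of $M'=M'_{n_1,\dots,n_m}$, let $\rho$ be a subquotient of $\tau$, and let $\theta$ be a non-degenerate character of $U=U_{n_1}\times\cdots\times U_{n_m}$. If $\rho^{(n)}_\theta\neq0$, then $\tau^{(n)}_\theta\neq0$.
   Context: $F$ is a non-archimedean locally compact field of residual characteristic $p$, $k$ an algebraically closed field of characteristic $\ell\neq p$. $M_{n_1,\dots,n_m}=\mathrm{GL}_{n_1}(F)\times\cdots\times\mathrm{GL}_{n_m}(F)$ embedded block-diagonally in $\mathrm{GL}_n(F)$, and $M'_{n_1,\dots,n_m}=M_{n_1,\dots,n_m}\cap\mathrm{SL}_n(F)$. $U_{n_i}$ is the upper unitriangular subgroup of $\mathrm{GL}_{n_i}(F)$; $\theta:U\to k^\times$ is a smooth character trivial on $[U,U]$ and nontrivial on each simple root subgroup. Derivative: for $1\le s\le m$ and $2\le j\le n_s$ let $N_{s,j}\subset U$ be the subgroup of elements equal to the identity in all blocks except block $s$, where the entry is an upper unitriangular matrix whose only possibly nonzero off-diagonal entries lie in column $j$, rows $1,\dots,j-1$. List these as $N_{m,n_m},\dots,N_{m,2},N_{m-1,n_{m-1}},\dots,N_{1,2}$. For a representation on a space $E$, put $E_0=E$ and let $E_t$ be the quotient of $E_{t-1}$ by the span of $ga-\theta(g)a$, $g$ in the $t$-th group of the list, $a\in E_{t-1}$. The final quotient is the $n$-th derivative, denoted $(\cdot)^{(n)}_\theta$ (written $(\cdot)^{(n_1+\cdots+n_m)}_{\theta,m}$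 in the paper). *)

theory Defs
  imports "HOL-Analysis.Analysis" "HOL-Combinatorics.Permutations"
          "HOL-Computational_Algebra.Polynomial"
begin

definition nonarch_local_field :: "('f::field \<Rightarrow> real) \<Rightarrow> nat \<Rightarrow> bool" where
  "nonarch_local_field absv p \<longleftrightarrow>
     (\<forall>x. 0 \<le> absv x) \<and> (\<forall>x. absv x = 0 \<longleftrightarrow> x = 0) \<and>
     (\<forall>x y. absv (x * y) = absv x * absv y) \<and>
     (\<forall>x y. absv (x + y) \<le> max (absv x) (absv y)) \<and>
     (\<exists>x. absv x \<noteq> 0 \<and> absv x \<noteq> 1) \<and>
     locally_compact_space (Metric_space.mtopology UNIV (\<lambda>x y. absv (x - y))) \<and>
     prime p \<and> absv (of_nat p) < 1"

definition alg_closed_field :: "'k::field itself \<Rightarrow> bool" where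
  "alg_closed_field _ \<longleftrightarrow> (\<forall>q::'k poly. 0 < degree q \<longrightarrow> (\<exists>x. poly q x = 0))"

section \<open>Matrices of size n, as functions nat => nat => F (zero outside [0,n)^2)\<close>

type_synonym 'f mat = "nat \<Rightarrow> nat \<Rightarrow> 'f"

definition mat_one :: "nat \<Rightarrow> 'f::field mat" where
  "mat_one n i j = (if i = j \<and> i < n then 1 else 0)"

definition mat_mul :: "nat \<Rightarrow> 'f::field mat \<Rightarrow> 'f mat \<Rightarrow> 'f mat" where
  "mat_mul n A B i j = (if i < n \<and> j < n then (\<Sum>l<n. A i l * B l j) else 0)"

definition mat_det :: "nat \<Rightarrow> 'f::field mat \<Rightarrow> 'f" where
  "mat_det n A = (\<Sum>q | q permutes {..<n}. of_int (sign q) * (\<Prod>i<n. A i (q i)))"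

section \<open>Blocks for the partition n = n_1 + ... + n_m (ns = [n_1,...,n_m], 0-indexed blocks)\<close>

definition offs :: "nat list \<Rightarrow> nat \<Rightarrow> nat" where
  "offs ns s = sum_list (take s ns)"

definition in_block :: "nat list \<Rightarrow> nat \<Rightarrow> nat \<Rightarrow> bool" where
  "in_block ns i s \<longleftrightarrow> s < length ns \<and> offs ns s \<le> i \<and> i < offs ns s + ns ! s"

definition block_diag :: "nat list \<Rightarrow> 'f::field mat \<Rightarrow> bool" where
  "block_diag ns g \<longleftrightarrow> (\<forall>i j. g i j \<noteq> 0 \<longrightarrow> (\<exists>s. in_block ns i s \<and> in_block ns j s))"

definition Mprime :: "nat list \<Rightarrow> 'f::field mat set" where
  "Mprime ns = {g. block_diag ns g \<and> mat_det (sum_list ns) g = 1}"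

definition Uset :: "nat list \<Rightarrow> 'f::field mat set" where
  "Uset ns = {g. block_diag ns g \<and> (\<forall>i < sum_list ns. g i i = 1) \<and> (\<forall>i j. j < i \<longrightarrow> g i j = 0)}"

text \<open>N_{s,j} (s 0-indexed block, j in 2..n_s as in the paper, 1-indexed inside the block).\<close>
definition Nset :: "nat list \<Rightarrow> nat \<Rightarrow> nat \<Rightarrow> 'f::field mat set" where
  "Nset ns s j = {g \<in> Uset ns. \<forall>a b. a \<noteq> b \<and> g a b \<noteq> 0 \<longrightarrow>
                     b = offs ns s + j - 1 \<and> offs ns s \<le> a}"

definition deriv_groups :: "nat list \<Rightarrow> 'f::field mat set list" where
  "deriv_groups ns = concat (map (\<lambda>s. map (\<lambda>j. Nset ns s j) (rev [2..<Suc (ns ! s)]))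
                                 (rev [0..<length ns]))"

definition root_elt :: "nat \<Rightarrow> nat \<Rightarrow> 'f::field \<Rightarrow> 'f mat" where
  "root_elt n i x = (\<lambda>a b. mat_one n a b + (if a = i \<and> b = Suc i then x else 0))"

definition nondeg_character ::
  "('f::field \<Rightarrow> real) \<Rightarrow> nat list \<Rightarrow> ('f mat \<Rightarrow> 'k::field) \<Rightarrow> bool" where
  "nondeg_character absv ns \<theta> \<longleftrightarrow>
     (let n = sum_list ns in
      (\<forall>g \<in> Uset ns. \<theta> g \<noteq> 0) \<and>
      (\<forall>g \<in> Uset ns. \<forall>h \<in> Uset ns. \<theta> (mat_mul n g h) = \<theta> g * \<theta> h) \<and>
      (\<exists>\<epsilon>>0. \<forall>g \<in> Uset ns. (\<forall>i<n. \<forall>j<n. absv (g i j - mat_one n i j) < \<epsilon>) \<longrightarrow> \<theta> g = 1) \<and>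
      (\<forall>s < length ns. \<forall>i. offs ns s \<le> i \<and> Suc i < offs ns s + ns ! s \<longrightarrow>
          (\<exists>x. \<theta> (root_elt n i x) \<noteq> 1)))"

definition rep_M ::
  "nat list \<Rightarrow> ('k::field \<Rightarrow> 'v::ab_group_add \<Rightarrow> 'v) \<Rightarrow> ('f::field mat \<Rightarrow> 'v \<Rightarrow> 'v) \<Rightarrow> bool" where
  "rep_M ns sc act \<longleftrightarrow>
     vector_space sc \<and>
     act (mat_one (sum_list ns)) = id \<and>
     (\<forall>g \<in> Mprime ns. \<forall>h \<in> Mprime ns. act (mat_mul (sum_list ns) g h) = act g \<circ> act h) \<and>
     (\<forall>g \<in> Mprime ns. Vector_Spaces.linear sc sc (act g))"

definition smooth_representation ::
  "('f::field \<Rightarrow> real) \<Rightarrow> nat list \<Rightarrow> ('k::field \<Rightarrow> 'v::ab_group_add \<Rightarrow> 'v) \<Rightarrow> ('f mat \<Rightarrow> 'v \<Rightarrow> 'v) \<Rightarrow> bool" where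
  "smooth_representation absv ns sc act \<longleftrightarrow>
     rep_M ns sc act \<and>
     (\<forall>v. \<exists>\<epsilon>>0. \<forall>g \<in> Mprime ns.
        (\<forall>i<sum_list ns. \<forall>j<sum_list ns. absv (g i j - mat_one (sum_list ns) i j) < \<epsilon>) \<longrightarrow> act g v = v)"

text \<open>rho (on 'w) is isomorphic to W1/W2 for M'-stable subspaces W2 \<subseteq> W1 of tau (on 'v).\<close>
definition subquotient ::
  "nat list \<Rightarrow> ('k::field \<Rightarrow> 'v::ab_group_add \<Rightarrow> 'v) \<Rightarrow> ('f::field mat \<Rightarrow> 'v \<Rightarrow> 'v)
   \<Rightarrow> ('k \<Rightarrow> 'w::ab_group_add \<Rightarrow> 'w) \<Rightarrow> ('f mat \<Rightarrow> 'w \<Rightarrow> 'w) \<Rightarrow> bool" where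
  "subquotient ns sv actv sw actw \<longleftrightarrow>
    (\<exists>W1 W2 \<phi>. module.subspace sv W1 \<and> module.subspace sv W2 \<and> W2 \<subseteq> W1 \<and>
       (\<forall>g \<in> Mprime ns. actv g ` W1 \<subseteq> W1 \<and> actv g ` W2 \<subseteq> W2) \<and>
       (\<forall>x\<in>W1. \<forall>y\<in>W1. \<phi> (x + y) = \<phi> x + \<phi> y) \<and>
       (\<forall>c. \<forall>x\<in>W1. \<phi> (sv c x) = sw c (\<phi> x)) \<and>
       \<phi> ` W1 = UNIV \<and> (\<forall>x\<in>W1. \<phi> x = 0 \<longleftrightarrow> x \<in> W2) \<and>
       (\<forall>g \<in> Mprime ns. \<forall>x\<in>W1. \<phi> (actv g x) = actw g (\<phi> x)))"

text \<open>E_t = E / K_t, where K_0 = 0 and K_t is the preimage in E of the span of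
  g a - theta(g) a in E_{t-1}, i.e. K_t = span (K_{t-1} \<union> {g a - theta(g) a}).\<close>
definition deriv_kernel ::
  "('k::field \<Rightarrow> 'v::ab_group_add \<Rightarrow> 'v) \<Rightarrow> ('f::field mat \<Rightarrow> 'v \<Rightarrow> 'v) \<Rightarrow> ('f mat \<Rightarrow> 'k)
   \<Rightarrow> 'f mat set list \<Rightarrow> 'v set" where
  "deriv_kernel sc act \<theta> Ns =
     foldl (\<lambda>K N. module.span sc (K \<union> {act g a - sc (\<theta> g) a | g a. g \<in> N})) {0} Ns"

text \<open>The n-th derivative E / K_final is nonzero iff K_final is not all of E.\<close>
definition derivative_nonzero ::
  "nat list \<Rightarrow> ('k::field \<Rightarrow> 'v::ab_group_add \<Rightarrow> 'v) \<Rightarrow> ('f::field mat \<Rightarrow> 'v \<Rightarrow> 'v) \<Rightarrow> ('f mat \<Rightarrow> 'k) \<Rightarrow> bool" where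
  "derivative_nonzero ns sc act \<theta> \<longleftrightarrow> deriv_kernel sc act \<theta> (deriv_groups ns) \<noteq> UNIV"

end

theory Submission
  imports Defs
begin

(* The n-th derivative of E is the quotient of E by the span of the vectors g a - theta(g) a,
   g running over the groups N_{s,j}; each N_{s,j} is the abelian group of matrices 1 + w e_J^T
   with a fixed column J.  On a smooth representation every such g satisfies g^(p^N) a = a and
   theta(g)^(p^N) = 1 for N large, and p is invertible in k.  Hence averaging over the cyclic
   group generated by g, with weights theta(g)^(-i), is a projector killing g a - theta(g) a,
   and composing such averages shows that the twisted coinvariants of one column group commute
   with restriction to an invariant subspace.  The groups appear in order of decreasing column,
   and a column group normalizes those with larger columns, so the statement propagates along
   the whole list: the derivative functor is exact.  If the derivative of tau vanished, every
   vector of W1 would thus be a combination of twisted differences with entries in W1, and its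
   image in rho = W1/W2 shows that the derivative of rho vanishes. *)

subsection \<open>Averaging operators\<close>

lemma funpow_image_subset: "T ` S \<subseteq> S \<Longrightarrow> (T ^^ i) ` S \<subseteq> S"
  by (induct i) auto

lemma funpow_comp_commute: "F \<circ> T = T \<circ> F \<Longrightarrow> F ((T ^^ i) x) = (T ^^ i) (F x)"
  by (induct i) (simp_all add: fun_eq_iff)

locale twisted_action = vector_space scale
  for scale :: "'k::field \<Rightarrow> 'v::ab_group_add \<Rightarrow> 'v"
  + fixes act :: "'g \<Rightarrow> 'v \<Rightarrow> 'v" and chi :: "'g \<Rightarrow> 'k"
begin

sublocale endo: vector_space_pair scale scale ..

abbreviation linear_endo :: "('v \<Rightarrow> 'v) \<Rightarrow> bool" where
  "linear_endo f \<equiv> Vector_Spaces.linear scale scale f"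

lemma linear_endo_funpow: "linear_endo T \<Longrightarrow> linear_endo (T ^^ i)"
  by (induct i) (auto simp: linear_id intro: Vector_Spaces.linear_compose)

text \<open>For \<open>T\<close> with \<open>T\<^sup>r = c\<^sup>r\<close> on a vector and \<open>r\<close> invertible in the scalars,
  \<open>average T c r\<close> is the projection onto the \<open>c\<close>-eigenspace of the cyclic group
  generated by \<open>T\<close>.\<close>
definition average :: "('v \<Rightarrow> 'v) \<Rightarrow> 'k \<Rightarrow> nat \<Rightarrow> 'v \<Rightarrow> 'v" where
  "average T c r v = scale (inverse (of_nat r)) (\<Sum>i<r. scale (inverse (c ^ i)) ((T ^^ i) v))"

lemma linear_average:
  assumes "linear_endo T"
  shows "linear_endo (average T c r)"
proof -
  have L: "linear_endo (T ^^ i)" for i using linear_endo_funpow[OF assms] .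
  show ?thesis
    unfolding Vector_Spaces.linear_iff
    by (simp add: vector_space_axioms average_def endo.linear_add[OF L] endo.linear_scale[OF L]
        scale_right_distrib sum.distrib scale_sum_right ac_simps)
qed

lemma average_image_subset:
  assumes "subspace S" "T ` S \<subseteq> S"
  shows "average T c r ` S \<subseteq> S"
  using funpow_image_subset[OF assms(2)] assms(1)
  by (auto simp: average_def intro!: subspace_scale subspace_sum)

lemma average_commute:
  assumes "linear_endo F" "F \<circ> T = T \<circ> F"
  shows "F \<circ> average T c r = average T c r \<circ> F"
  by (simp add: fun_eq_iff average_def endo.linear_scale[OF assms(1)] endo.linear_sum[OF assms(1)]
      funpow_comp_commute[OF assms(2)])

lemma average_kills:
  assumes L: "linear_endo T" and c: "c \<noteq> 0" and tor: "(T ^^ r) a = scale (c ^ r) a"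
  shows "average T c r (T a - scale c a) = 0"
proof -
  define d where "d i = scale (inverse (c ^ i)) ((T ^^ i) a)" for i
  have L': "linear_endo (T ^^ i)" for i using linear_endo_funpow[OF L] .
  have telescope:
    "scale (inverse (c ^ i)) ((T ^^ i) (T a - scale c a)) = scale c (d (Suc i) - d i)" for i
  proof -
    have "(T ^^ i) (T a) = (T ^^ Suc i) a" by (simp add: funpow_swap1)
    moreover have "inverse (c ^ i) = c * inverse (c ^ Suc i)" using c by (simp add: field_simps)
    ultimately show ?thesis
      using c by (simp add: d_def endo.linear_diff[OF L'] endo.linear_scale[OF L']
          scale_right_diff_distrib mult.commute)
  qed
  have "(\<Sum>i<r. scale (inverse (c ^ i)) ((T ^^ i) (T a - scale c a))) = scale c (d r - d 0)"
    by (simp add: telescope scale_sum_right[symmetric] sum_lessThan_telescope)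
  also have "d r - d 0 = 0" using c tor by (simp add: d_def)
  finally show ?thesis by (simp add: average_def)
qed

lemma funpow_diff_scale_in:
  assumes L: "linear_endo T" and K: "subspace K" "T ` K \<subseteq> K" and w: "T w - scale c w \<in> K"
  shows "(T ^^ i) w - scale (c ^ i) w \<in> K"
proof (induct i)
  case 0 then show ?case using subspace_0[OF K(1)] by simp
next
  case (Suc i)
  have "(T ^^ Suc i) w - scale (c ^ Suc i) w
      = T ((T ^^ i) w - scale (c ^ i) w) + scale (c ^ i) (T w - scale c w)"
    by (simp add: endo.linear_diff[OF L] endo.linear_scale[OF L] scale_right_diff_distrib
        mult.commute)
  then show ?case using Suc K w by (auto intro!: subspace_add subspace_scale)
qed

lemma diff_average_in:
  assumes L: "linear_endo T" and K: "subspace K" "T ` K \<subseteq> K"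
    and w: "T w - scale c w \<in> K" and c: "c \<noteq> 0" and r: "(of_nat r :: 'k) \<noteq> 0"
  shows "w - average T c r w \<in> K"
proof -
  have "w - average T c r w
      = scale (inverse (of_nat r)) (\<Sum>i<r. - scale (inverse (c ^ i)) ((T ^^ i) w - scale (c ^ i) w))"
    using c r by (simp add: average_def sum_subtractf scale_right_diff_distrib sum_constant_scale)
  also have "\<dots> \<in> K"
    using funpow_diff_scale_in[OF L K w] K(1)
    by (intro subspace_scale subspace_sum subspace_neg) auto
  finally show ?thesis .
qed

subsection \<open>Twisted coinvariants of abelian groups\<close>

lemma span_Un_set_plus: "span (A \<union> B) = span A + span B"
  by (auto simp: span_Un set_plus_def)

lemma span_Un_span: "span (span A \<union> B) = span (A \<union> B)"
  by (simp add: span_Un_set_plus span_span)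

lemma subspace_set_plus:
  assumes "subspace A" "subspace B"
  shows "subspace (A + B)"
proof -
  have "A + B = {x + y | x y. x \<in> A \<and> y \<in> B}" by (auto simp: set_plus_def)
  then show ?thesis using subspace_sums[OF assms] by simp
qed

definition twisted_diffs :: "'g set \<Rightarrow> 'v set \<Rightarrow> 'v set" where
  "twisted_diffs S Y = {act g a - scale (chi g) a | g a. g \<in> S \<and> a \<in> Y}"

definition stable :: "'g set \<Rightarrow> 'v set \<Rightarrow> bool" where
  "stable S W \<longleftrightarrow> (\<forall>g\<in>S. act g ` W \<subseteq> W)"

text \<open>The abstract form of a unipotent group acting smoothly in characteristic \<open>\<ell> \<noteq> p\<close>:
  commuting operators, \<open>chi\<close> multiplicative, and every vector is an eigenvector of some power
  \<open>act g ^^ r\<close> with \<open>r\<close> invertible in the scalars.\<close>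
definition tame_abelian :: "'g set \<Rightarrow> bool" where
  "tame_abelian C \<longleftrightarrow>
     (\<forall>g\<in>C. linear_endo (act g) \<and> chi g \<noteq> 0) \<and>
     (\<forall>g\<in>C. \<forall>h\<in>C. \<exists>k\<in>C. act g \<circ> act h = act k \<and> chi k = chi g * chi h) \<and>
     (\<forall>g\<in>C. \<forall>h\<in>C. act g \<circ> act h = act h \<circ> act g) \<and>
     (\<forall>g\<in>C. \<forall>a. \<exists>r. of_nat r \<noteq> (0::'k) \<and> (act g ^^ r) a = scale (chi g ^ r) a)"

definition normalizes :: "'g set \<Rightarrow> 'g set \<Rightarrow> bool" where
  "normalizes D C \<longleftrightarrow> (\<forall>h\<in>D. \<forall>g\<in>C. \<exists>g'\<in>C. act h \<circ> act g = act g' \<circ> act h \<and> chi g' = chi g)"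

lemma twisted_diffs_Un: "twisted_diffs (A \<union> B) Y = twisted_diffs A Y \<union> twisted_diffs B Y"
  unfolding twisted_diffs_def by blast

lemma twisted_diffs_empty [simp]: "twisted_diffs {} Y = {}"
  unfolding twisted_diffs_def by blast

lemma span_twisted_diffs_subset:
  assumes "subspace W" "stable S W"
  shows "span (twisted_diffs S W) \<subseteq> W"
  using assms
  by (intro span_minimal)
    (auto simp: twisted_diffs_def stable_def intro!: subspace_diff subspace_scale)

lemma stable_span_twisted_diffs:
  assumes C: "tame_abelian C"
  shows "stable C (span (twisted_diffs C W))"
  unfolding stable_def
proof
  fix g assume g: "g \<in> C"
  have L: "linear_endo (act g)" using C g by (simp add: tame_abelian_def)
  have "act g v \<in> span (twisted_diffs C W)" if v: "v \<in> twisted_diffs C W" for v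
  proof -
    obtain h a where h: "h \<in> C" "a \<in> W" and v_eq: "v = act h a - scale (chi h) a"
      using v unfolding twisted_diffs_def by blast
    obtain k where k: "k \<in> C" "act g \<circ> act h = act k" "chi k = chi g * chi h"
      using C g h(1) by (force simp: tame_abelian_def)
    have "act g v = (act k a - scale (chi k) a) - scale (chi h) (act g a - scale (chi g) a)"
      using k(2,3) by (simp add: v_eq endo.linear_diff[OF L] endo.linear_scale[OF L] fun_eq_iff
          scale_right_diff_distrib algebra_simps)
    moreover have "act k a - scale (chi k) a \<in> twisted_diffs C W"
      using k(1) h(2) unfolding twisted_diffs_def by blast
    moreover have "act g a - scale (chi g) a \<in> twisted_diffs C W"
      using g h(2) unfolding twisted_diffs_def by blast
    ultimately show ?thesis by (metis span_diff span_scale span_base)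
  qed
  then show "act g ` span (twisted_diffs C W) \<subseteq> span (twisted_diffs C W)"
    by (simp add: endo.linear_span_image[OF L, symmetric] image_subset_iff span_minimal)
qed

inductive_set averagers :: "'g set \<Rightarrow> ('v \<Rightarrow> 'v) set" for C where
  averagers_id: "id \<in> averagers C"
| averagers_step: "E \<in> averagers C \<Longrightarrow> g \<in> C \<Longrightarrow> of_nat r \<noteq> (0::'k) \<Longrightarrow>
    average (act g) (chi g) r \<circ> E \<in> averagers C"

context
  fixes C assumes C: "tame_abelian C"
begin

lemma linear_act: "g \<in> C \<Longrightarrow> linear_endo (act g)"
  using C by (simp add: tame_abelian_def)

lemma averagers_linear: "E \<in> averagers C \<Longrightarrow> linear_endo E"
proof (induct rule: averagers.induct)
  case averagers_id
  show ?case by (rule linear_id)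
next
  case (averagers_step E g r)
  then show ?case
    using Vector_Spaces.linear_compose linear_average linear_act by blast
qed

lemma averagers_image_subset:
  assumes "E \<in> averagers C" "subspace S" "stable C S"
  shows "E ` S \<subseteq> S"
  using assms(1)
proof (induct rule: averagers.induct)
  case (averagers_step E g r)
  have "average (act g) (chi g) r ` S \<subseteq> S"
    using assms(2,3) averagers_step(3) by (intro average_image_subset) (auto simp: stable_def)
  with averagers_step(2) show ?case by (auto simp: image_comp[symmetric])
qed simp

lemma averagers_commute:
  assumes "E \<in> averagers C" "h \<in> C"
  shows "E \<circ> act h = act h \<circ> E"
  using assms(1)
proof (induct rule: averagers.induct)
  case (averagers_step E g r)
  have "act h \<circ> act g = act g \<circ> act h"
    using C assms(2) averagers_step(3) by (simp add: tame_abelian_def)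
  then have "act h \<circ> average (act g) (chi g) r = average (act g) (chi g) r \<circ> act h"
    using assms(2) by (intro average_commute linear_act)
  with averagers_step(2) show ?case by (metis comp_assoc)
qed simp

lemma averagers_diff_in:
  assumes "E \<in> averagers C" "subspace W" "stable C W" "w \<in> W"
  shows "w - E w \<in> span (twisted_diffs C W)"
  using assms(1)
proof (induct rule: averagers.induct)
  case (averagers_step E g r)
  have "E w \<in> W" using averagers_image_subset[OF averagers_step(1) assms(2,3)] assms(4) by blast
  then have "act g (E w) - scale (chi g) (E w) \<in> span (twisted_diffs C W)"
    using averagers_step(3) by (auto simp: twisted_diffs_def intro!: span_base)
  then have "E w - average (act g) (chi g) r (E w) \<in> span (twisted_diffs C W)"
    using C averagers_step(3,4) stable_span_twisted_diffs[OF C]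
    by (intro diff_average_in linear_act) (auto simp: tame_abelian_def stable_def)
  with averagers_step(2)
  have "(w - E w) + (E w - average (act g) (chi g) r (E w)) \<in> span (twisted_diffs C W)"
    by (rule span_add)
  then show ?case by simp
qed (simp add: span_zero)

lemma averagers_kill:
  assumes "y \<in> span (twisted_diffs C UNIV)"
  shows "\<exists>E\<in>averagers C. E y = 0"
  using assms
proof (induct rule: span_induct_alt)
  case base
  show ?case by (metis averagers_id id_apply)
next
  case (step c x y)
  obtain E where E: "E \<in> averagers C" "E y = 0" using step(2) by blast
  obtain g a where g: "g \<in> C" and x: "x = act g a - scale (chi g) a"
    using step(1) unfolding twisted_diffs_def by blast
  obtain r where r: "of_nat r \<noteq> (0::'k)" "(act g ^^ r) a = scale (chi g ^ r) a"
    using C g unfolding tame_abelian_def by blast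
  let ?A = "average (act g) (chi g) r"
  have LE: "linear_endo E" and LA: "linear_endo ?A"
    using averagers_linear[OF E(1)] linear_average[OF linear_act[OF g]] .
  have "?A x = 0" using C g r(2) by (simp add: x average_kills linear_act tame_abelian_def)
  moreover have "E \<circ> ?A = ?A \<circ> E"
    using averagers_commute[OF E(1) g] by (intro average_commute LE)
  ultimately have "?A (E x) = 0" by (metis comp_apply endo.linear_0[OF LE])
  then have "(?A \<circ> E) (scale c x + y) = 0"
    by (simp add: E(2) endo.linear_add[OF LE] endo.linear_scale[OF LE] endo.linear_add[OF LA]
        endo.linear_scale[OF LA] endo.linear_0[OF LA])
  then show ?case using averagers_step[OF E(1) g r(1)] by blast
qed

lemma tame_abelian_exact:
  assumes "subspace W" "stable C W" "subspace Z" "stable C Z"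
  shows "W \<inter> (span (twisted_diffs C UNIV) + Z) \<subseteq> span (twisted_diffs C W) + Z"
proof
  fix x assume "x \<in> W \<inter> (span (twisted_diffs C UNIV) + Z)"
  then obtain y z where x: "x \<in> W" "x = y + z"
    and y: "y \<in> span (twisted_diffs C UNIV)" and z: "z \<in> Z"
    by (auto elim: set_plus_elim)
  obtain E where E: "E \<in> averagers C" "E y = 0" using averagers_kill[OF y] by blast
  have "E x = E z" using x E averagers_linear[OF E(1)] by (simp add: endo.linear_add)
  then have "E x \<in> Z" using averagers_image_subset[OF E(1) assms(3,4)] z by auto
  moreover have "x - E x \<in> span (twisted_diffs C W)"
    using averagers_diff_in[OF E(1) assms(1,2) x(1)] .
  ultimately show "x \<in> span (twisted_diffs C W) + Z"
    using set_plus_intro[of "x - E x" _ "E x"] by simp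
qed

end

lemma stable_set_plus:
  assumes "\<forall>g\<in>S. linear_endo (act g)" "stable S A" "stable S B"
  shows "stable S (A + B)"
  unfolding stable_def
proof (intro ballI subsetI)
  fix g v assume g: "g \<in> S" and "v \<in> act g ` (A + B)"
  then obtain a b where "a \<in> A" "b \<in> B" "v = act g (a + b)" by (auto elim: set_plus_elim)
  then show "v \<in> A + B"
    using assms g unfolding stable_def by (simp add: endo.linear_add) (blast intro: set_plus_intro)
qed

lemma stable_span_twisted_diffs_normalized:
  assumes "normalizes D C" "\<forall>h\<in>D. linear_endo (act h)"
  shows "stable D (span (twisted_diffs C UNIV))"
  unfolding stable_def
proof
  fix h assume h: "h \<in> D"
  have "act h ` twisted_diffs C UNIV \<subseteq> twisted_diffs C UNIV"
  proof
    fix v assume "v \<in> act h ` twisted_diffs C UNIV"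
    then obtain g a where g: "g \<in> C" and v: "v = act h (act g a - scale (chi g) a)"
      unfolding twisted_diffs_def by blast
    obtain g' where g': "g' \<in> C" "act h \<circ> act g = act g' \<circ> act h" "chi g' = chi g"
      using assms(1) h g unfolding normalizes_def by blast
    have "v = act g' (act h a) - scale (chi g') (act h a)"
      using assms(2) h g'(2,3)
      by (simp add: v endo.linear_diff endo.linear_scale fun_eq_iff)
    then show "v \<in> twisted_diffs C UNIV" using g'(1) unfolding twisted_diffs_def by blast
  qed
  then show "act h ` span (twisted_diffs C UNIV) \<subseteq> span (twisted_diffs C UNIV)"
    using assms(2) h by (simp add: endo.linear_span_image[symmetric] span_mono)
qed

text \<open>Induction along the chain: the groups not yet treated are absorbed into \<open>Z\<close>,
  which stays stable under the later groups because they normalize the earlier ones.\<close>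
lemma normalizing_chain_exact:
  assumes "\<forall>C\<in>set Cs. tame_abelian C" "sorted_wrt (\<lambda>C D. normalizes D C) Cs"
    and "subspace W" "stable (\<Union>(set Cs)) W" "subspace Z" "stable (\<Union>(set Cs)) Z"
  shows "W \<inter> (span (twisted_diffs (\<Union>(set Cs)) UNIV) + Z) \<subseteq> span (twisted_diffs (\<Union>(set Cs)) W) + Z"
  using assms(1,2,4,5,6)
proof (induct Cs arbitrary: Z)
  case Nil
  then show ?case by (simp add: twisted_diffs_def)
next
  case (Cons C Cs)
  let ?S = "\<Union>(set Cs)"
  define Z' where "Z' = span (twisted_diffs C UNIV) + Z"
  have C: "tame_abelian C" and lin: "\<forall>h\<in>?S. linear_endo (act h)"
    using Cons.prems(1) by (auto simp: tame_abelian_def)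
  have "subspace Z'" unfolding Z'_def using Cons.prems(4) by (intro subspace_set_plus subspace_span)
  moreover have "stable ?S Z'"
    unfolding Z'_def
  proof (intro stable_set_plus lin)
    show "stable ?S (span (twisted_diffs C UNIV))"
      unfolding stable_def
    proof
      fix h assume "h \<in> ?S"
      then obtain D where D: "D \<in> set Cs" "h \<in> D" by blast
      then have "stable D (span (twisted_diffs C UNIV))"
        using Cons.prems(2) lin by (intro stable_span_twisted_diffs_normalized) auto
      with D(2) show "act h ` span (twisted_diffs C UNIV) \<subseteq> span (twisted_diffs C UNIV)"
        by (simp add: stable_def)
    qed
    show "stable ?S Z" using Cons.prems(5) by (simp add: stable_def)
  qed
  ultimately have IH: "W \<inter> (span (twisted_diffs ?S UNIV) + Z') \<subseteq> span (twisted_diffs ?S W) + Z'"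
    using Cons by (intro Cons.hyps) (auto simp: stable_def)
  show ?case
  proof
    fix x assume x: "x \<in> W \<inter> (span (twisted_diffs (\<Union>(set (C # Cs))) UNIV) + Z)"
    then have "x \<in> W \<inter> (span (twisted_diffs ?S UNIV) + Z')"
      by (simp add: Z'_def twisted_diffs_Un span_Un_set_plus ac_simps)
    with IH x have "x \<in> span (twisted_diffs ?S W) + Z'" by blast
    then obtain k v where k: "k \<in> span (twisted_diffs ?S W)" and v: "v \<in> Z'" and xkv: "x = k + v"
      by (auto elim: set_plus_elim)
    have "k \<in> W"
      using k span_twisted_diffs_subset[OF assms(3)] Cons.prems(3) by (auto simp: stable_def)
    then have "v \<in> W" using x xkv assms(3) subspace_diff by fastforce
    then have "v \<in> span (twisted_diffs C W) + Z"
      using v tame_abelian_exact[OF C assms(3) _ Cons.prems(4)] Cons.prems(3,5)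
      unfolding Z'_def by (auto simp: stable_def)
    then have "x \<in> span (twisted_diffs ?S W) + (span (twisted_diffs C W) + Z)"
      using k xkv by (auto intro: set_plus_intro)
    then show "x \<in> span (twisted_diffs (\<Union>(set (C # Cs))) W) + Z"
      by (simp add: twisted_diffs_Un span_Un_set_plus ac_simps)
  qed
qed

end

lemma deriv_kernel_eq_span:
  fixes sc :: "'k::field \<Rightarrow> 'v::ab_group_add \<Rightarrow> 'v" and act :: "'f::field mat \<Rightarrow> 'v \<Rightarrow> 'v"
  assumes "vector_space sc"
  shows "deriv_kernel sc act \<theta> Ns
    = module.span sc (twisted_action.twisted_diffs sc act \<theta> (\<Union>(set Ns)) UNIV)"
proof -
  interpret twisted_action sc act \<theta> using assms by (simp add: twisted_action_def)
  have "foldl (\<lambda>K N. span (K \<union> twisted_diffs N UNIV)) (span A) Ns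
      = span (A \<union> twisted_diffs (\<Union>(set Ns)) UNIV)" for A
    by (induct Ns arbitrary: A) (simp_all add: span_Un_span twisted_diffs_Un Un_assoc)
  from this[of "{}"] show ?thesis by (simp add: deriv_kernel_def twisted_diffs_def)
qed

lemma span_twisted_diffs_image:
  fixes sv :: "'k::field \<Rightarrow> 'v::ab_group_add \<Rightarrow> 'v" and sw :: "'k \<Rightarrow> 'w::ab_group_add \<Rightarrow> 'w"
  assumes "vector_space sv" "vector_space sw"
    and W: "module.subspace sv W" "\<forall>g\<in>S. actv g ` W \<subseteq> W"
    and add: "\<forall>x\<in>W. \<forall>y\<in>W. \<phi> (x + y) = \<phi> x + \<phi> y"
    and scale: "\<forall>c. \<forall>x\<in>W. \<phi> (sv c x) = sw c (\<phi> x)"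
    and equivariant: "\<forall>g\<in>S. \<forall>x\<in>W. \<phi> (actv g x) = actw g (\<phi> x)"
  shows "\<phi> ` module.span sv (twisted_action.twisted_diffs sv actv \<theta> S W)
    \<subseteq> module.span sw (twisted_action.twisted_diffs sw actw \<theta> S UNIV)"
proof -
  interpret V: twisted_action sv actv \<theta> using assms(1) by (simp add: twisted_action_def)
  interpret U: twisted_action sw actw \<theta> using assms(2) by (simp add: twisted_action_def)
  have "x \<in> W \<and> \<phi> x \<in> U.span (U.twisted_diffs S UNIV)" if "x \<in> V.span (V.twisted_diffs S W)" for x
    using that
  proof (induct rule: V.span_induct_alt)
    case base
    have "\<phi> 0 = \<phi> (0 + 0)" by simp
    also have "\<dots> = \<phi> 0 + \<phi> 0" using add V.subspace_0[OF W(1)] by blast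
    finally have "\<phi> 0 = 0" by simp
    then show ?case using V.subspace_0[OF W(1)] by (simp add: U.span_zero)
  next
    case (step c d y)
    obtain g a where g: "g \<in> S" and a: "a \<in> W" and d: "d = actv g a - sv (\<theta> g) a"
      using step(1) unfolding V.twisted_diffs_def by blast
    have "actv g a \<in> W" and ca: "sv (\<theta> g) a \<in> W" using W g a by (auto intro: V.subspace_scale)
    then have dW: "d \<in> W" using d W(1) by (simp add: V.subspace_diff)
    have "\<phi> (actv g a) = \<phi> d + \<phi> (sv (\<theta> g) a)" using add dW ca d by (metis diff_add_cancel)
    then have "\<phi> d = actw g (\<phi> a) - sw (\<theta> g) (\<phi> a)" using equivariant scale g a by simp
    then have "\<phi> d \<in> U.twisted_diffs S UNIV" using g unfolding U.twisted_diffs_def by blast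
    moreover have "sv c d \<in> W" using dW W(1) by (simp add: V.subspace_scale)
    ultimately show ?case
      using step(2) add scale dW W(1)
      by (simp add: V.subspace_add U.span_add U.span_scale U.span_base)
  qed
  then show ?thesis by blast
qed

subsection \<open>Column subgroups of \<open>U\<close>\<close>

lemma offs_Suc: "offs ns (Suc s) = offs ns s + (if s < length ns then ns ! s else 0)"
  unfolding offs_def by (simp add: take_Suc_conv_app_nth)

lemma offs_mono: "s \<le> s' \<Longrightarrow> offs ns s \<le> offs ns s'"
  by (induct s' rule: dec_induct) (auto simp: offs_Suc intro: le_trans)

lemma block_end: "s < length ns \<Longrightarrow> offs ns s + ns ! s \<le> sum_list ns"
  using offs_mono[of "Suc s" "length ns" ns] by (simp add: offs_Suc) (simp add: offs_def)

lemma in_block_less: "in_block ns i s \<Longrightarrow> i < sum_list ns"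
  unfolding in_block_def using block_end[of s ns] by simp

lemma in_block_unique: "in_block ns i s \<Longrightarrow> in_block ns i s' \<Longrightarrow> s = s'"
proof (rule ccontr)
  assume "in_block ns i s" "in_block ns i s'" "s \<noteq> s'"
  moreover have "\<not> (in_block ns i t \<and> in_block ns i t')" if "t < t'" for t t'
    using offs_mono[of "Suc t" t' ns] that by (auto simp: in_block_def offs_Suc)
  ultimately show False by (metis linorder_neqE_nat)
qed

lemma in_block_exists: "i < sum_list ns \<Longrightarrow> \<exists>s. in_block ns i s"
proof (induct ns arbitrary: i)
  case (Cons a ns)
  show ?case
  proof (cases "i < a")
    case True
    then have "in_block (a # ns) i 0" by (simp add: in_block_def offs_def)
    then show ?thesis by blast
  next
    case False
    then obtain s where "in_block ns (i - a) s" using Cons by force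
    then have "in_block (a # ns) i (Suc s)" using False by (auto simp: in_block_def offs_def)
    then show ?thesis by blast
  qed
qed simp

lemma Uset_det:
  assumes g: "g \<in> Uset ns"
  shows "mat_det (sum_list ns) g = 1"
proof -
  let ?n = "sum_list ns"
  have "(\<Prod>i<?n. g i (q i)) = 0" if q: "q permutes {..<?n}" "q \<noteq> id" for q
  proof -
    obtain i where "i < ?n" "q i < i"
      using permutes_natset_ge[OF q(1)] q(2) by (meson lessThan_iff not_le)
    then show ?thesis using g by (intro prod_zero) (auto simp: Uset_def)
  qed
  then have "mat_det ?n g = (\<Sum>q\<in>{id}. of_int (sign q) * (\<Prod>i<?n. g i (q i)))"
    unfolding mat_det_def
    by (intro sum.mono_neutral_right) (auto simp: permutes_id finite_permutations)
  also have "\<dots> = 1" using g by (simp add: Uset_def)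
  finally show ?thesis .
qed

lemma Uset_subset_Mprime: "Uset ns \<subseteq> Mprime ns"
  using Uset_det by (auto simp: Mprime_def Uset_def)

text \<open>\<open>col_elem n J w\<close> is the matrix \<open>1 + w e\<^sub>J\<^sup>T\<close>, and \<open>colgroup ns J\<close> is the paper's
  \<open>N\<^sub>s\<^sub>,\<^sub>j\<close> for the global column \<open>J = offs ns s + j - 1\<close>.\<close>
definition col_elem :: "nat \<Rightarrow> nat \<Rightarrow> (nat \<Rightarrow> 'f::field) \<Rightarrow> 'f mat" where
  "col_elem n J w = (\<lambda>a b. mat_one n a b + (if b = J then w a else 0))"

definition block_column :: "nat list \<Rightarrow> nat \<Rightarrow> (nat \<Rightarrow> 'f::field) \<Rightarrow> bool" where
  "block_column ns J w \<longleftrightarrow> (\<forall>a. w a \<noteq> 0 \<longrightarrow> a < J \<and> (\<exists>s. in_block ns a s \<and> in_block ns J s))"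

definition colgroup :: "nat list \<Rightarrow> nat \<Rightarrow> 'f::field mat set" where
  "colgroup ns J = {g \<in> Uset ns. \<forall>a b. a \<noteq> b \<and> g a b \<noteq> 0 \<longrightarrow> b = J}"

lemma block_column_less: "block_column ns J w \<Longrightarrow> \<not> a < J \<Longrightarrow> w a = 0"
  unfolding block_column_def by blast

lemma block_column_add:
  "block_column ns J v \<Longrightarrow> block_column ns J w \<Longrightarrow> block_column ns J (\<lambda>a. v a + w a)"
  unfolding block_column_def by (metis add.right_neutral)

lemma block_column_scale: "block_column ns J w \<Longrightarrow> block_column ns J (\<lambda>a. c * w a)"
  unfolding block_column_def by auto

lemma block_column_conj:
  assumes "j < J" "block_column ns j v" "block_column ns J w"
  shows "block_column ns J (\<lambda>a. w a + w j * v a)"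
  unfolding block_column_def
proof (intro allI impI)
  fix a assume a: "w a + w j * v a \<noteq> 0"
  show "a < J \<and> (\<exists>s. in_block ns a s \<and> in_block ns J s)"
  proof (cases "w a = 0")
    case True
    then have "v a \<noteq> 0" "w j \<noteq> 0" using a by auto
    then obtain s s' where "a < j" "in_block ns a s" "in_block ns j s"
      and "in_block ns j s'" "in_block ns J s'"
      using assms(2,3) unfolding block_column_def by blast
    then show ?thesis using assms(1) in_block_unique by (metis order.strict_trans)
  qed (use assms(3) in \<open>auto simp: block_column_def\<close>)
qed

lemma mat_mul_col_elem:
  assumes "J < n"
  shows "mat_mul n (col_elem n J w) B = (\<lambda>a b. if a < n \<and> b < n then B a b + w a * B J b else 0)"
proof -
  have "(\<Sum>l<n. col_elem n J w a l * B l b) = B a b + w a * B J b" if "a < n" for a b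
    using that assms
    by (simp add: col_elem_def mat_one_def distrib_right sum.distrib sum.delta
        if_distrib[where f = "\<lambda>x. x * _"] cong: if_cong)
  then show ?thesis by (auto simp: fun_eq_iff mat_mul_def)
qed

lemma col_elem_zero: "col_elem n J (\<lambda>_. 0) = mat_one n"
  by (simp add: col_elem_def fun_eq_iff)

lemma col_elem_mult:
  assumes J: "J < sum_list ns" and "block_column ns J v" "block_column ns J w"
  shows "mat_mul (sum_list ns) (col_elem (sum_list ns) J v) (col_elem (sum_list ns) J w)
       = col_elem (sum_list ns) J (\<lambda>a. v a + w a)"
  unfolding mat_mul_col_elem[OF J]
  using J block_column_less[OF assms(2)] block_column_less[OF assms(3)]
  by (auto simp: fun_eq_iff col_elem_def mat_one_def algebra_simps)

lemma col_elem_conj: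
  assumes "j < J" "J < sum_list ns" "block_column ns j v" "block_column ns J w"
  shows "mat_mul (sum_list ns) (col_elem (sum_list ns) j v) (col_elem (sum_list ns) J w)
       = mat_mul (sum_list ns) (col_elem (sum_list ns) J (\<lambda>a. w a + w j * v a))
           (col_elem (sum_list ns) j v)"
  unfolding mat_mul_col_elem[OF assms(2)] mat_mul_col_elem[OF order.strict_trans[OF assms(1,2)]]
  using assms block_column_less[OF assms(3), of J]
  by (auto simp: fun_eq_iff col_elem_def mat_one_def algebra_simps)

lemma colgroup_col_elem:
  assumes J: "J < sum_list ns" and g: "g \<in> colgroup ns J"
  shows "block_column ns J (\<lambda>a. g a J - mat_one (sum_list ns) a J)"
    and "g = col_elem (sum_list ns) J (\<lambda>a. g a J - mat_one (sum_list ns) a J)"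
proof -
  let ?n = "sum_list ns"
  define w where "w a = g a J - mat_one ?n a J" for a
  show "block_column ns J w"
    unfolding block_column_def
  proof (intro allI impI)
    fix a assume "w a \<noteq> 0"
    moreover have "g J J = 1" using g J by (simp add: colgroup_def Uset_def)
    ultimately have "a \<noteq> J" "g a J \<noteq> 0" using J by (auto simp: w_def mat_one_def split: if_splits)
    moreover have "\<not> J < a" using g \<open>g a J \<noteq> 0\<close> by (auto simp: colgroup_def Uset_def)
    moreover have "\<exists>s. in_block ns a s \<and> in_block ns J s"
      using g \<open>g a J \<noteq> 0\<close> unfolding colgroup_def Uset_def block_diag_def by blast
    ultimately show "a < J \<and> (\<exists>s. in_block ns a s \<and> in_block ns J s)" by simp
  qed
  show "g = col_elem ?n J w"
  proof (intro ext)
    fix a b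
    have diag: "g a a = mat_one ?n a a"
    proof (cases "a < ?n")
      case False
      have "g a a = 0"
      proof (rule ccontr)
        assume "g a a \<noteq> 0"
        then obtain s where "in_block ns a s"
          using g unfolding colgroup_def Uset_def block_diag_def by blast
        then show False using in_block_less False by blast
      qed
      then show ?thesis using False by (simp add: mat_one_def)
    qed (use g in \<open>simp add: colgroup_def Uset_def mat_one_def\<close>)
    show "g a b = col_elem ?n J w a b"
    proof (cases "a = b")
      case True
      with diag show ?thesis by (cases "b = J") (simp_all add: col_elem_def w_def)
    next
      case False
      then have "g a b = 0" if "b \<noteq> J" using g that unfolding colgroup_def by blast
      with False show ?thesis by (simp add: col_elem_def w_def mat_one_def)
    qed
  qed
qed

lemma col_elem_in_colgroup:
  assumes w: "block_column ns J w"
  shows "col_elem (sum_list ns) J w \<in> colgroup ns J"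
proof -
  let ?n = "sum_list ns" and ?g = "col_elem (sum_list ns) J w"
  have nz: "(a = b \<and> a < ?n) \<or> (b = J \<and> w a \<noteq> 0)" if "?g a b \<noteq> 0" for a b
    using that by (auto simp: col_elem_def mat_one_def split: if_splits)
  have "block_diag ns ?g"
    unfolding block_diag_def
  proof (intro allI impI)
    fix a b assume "?g a b \<noteq> 0"
    then consider "a = b" "a < ?n" | "b = J" "w a \<noteq> 0" using nz by blast
    then show "\<exists>s. in_block ns a s \<and> in_block ns b s"
      by cases (use in_block_exists w in \<open>unfold block_column_def, blast+\<close>)
  qed
  moreover have "?g i i = 1" if "i < ?n" for i
    using that block_column_less[OF w, of J] by (simp add: col_elem_def mat_one_def)
  moreover have "?g a b = 0" if "b < a" for a b
    using that block_column_less[OF w, of a] by (simp add: col_elem_def mat_one_def)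
  ultimately show ?thesis using nz unfolding colgroup_def Uset_def by blast
qed

lemma colgroup_eq_col_elem_image:
  "J < sum_list ns \<Longrightarrow> colgroup ns J = col_elem (sum_list ns) J ` Collect (block_column ns J)"
  using colgroup_col_elem col_elem_in_colgroup by blast

lemma col_elem_in_Uset: "block_column ns J w \<Longrightarrow> col_elem (sum_list ns) J w \<in> Uset ns"
  using col_elem_in_colgroup by (auto simp: colgroup_def)

lemma mat_one_in_Uset: "mat_one (sum_list ns) \<in> Uset ns"
  unfolding Uset_def block_diag_def mat_one_def by (auto dest: in_block_exists split: if_splits)

lemma mat_mul_one_one: "mat_mul n (mat_one n) (mat_one n) = mat_one n"
  by (simp add: fun_eq_iff mat_mul_def mat_one_def if_distrib[where f = "\<lambda>x. x * _"] cong: if_cong)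

lemma character_one:
  assumes "\<forall>g\<in>Uset ns. \<theta> g \<noteq> 0"
    and "\<forall>g\<in>Uset ns. \<forall>h\<in>Uset ns. \<theta> (mat_mul (sum_list ns) g h) = \<theta> g * \<theta> h"
  shows "\<theta> (mat_one (sum_list ns)) = (1::'k::field)"
  using assms mat_one_in_Uset[of ns] mat_mul_one_one[of "sum_list ns"]
  by (metis mult_cancel_left1)

lemma col_elem_power_mult:
  assumes J: "J < sum_list ns" and w: "block_column ns J w"
  shows "mat_mul (sum_list ns) (col_elem (sum_list ns) J w)
           (col_elem (sum_list ns) J (\<lambda>a. of_nat r * w a))
       = col_elem (sum_list ns) J (\<lambda>a. of_nat (Suc r) * w a)"
  using col_elem_mult[OF J w block_column_scale[OF w]] by (simp add: algebra_simps)

lemma rep_col_elem_power: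
  assumes rep: "rep_M ns sv act" and J: "J < sum_list ns" and w: "block_column ns J w"
  shows "act (col_elem (sum_list ns) J w) ^^ r
    = act (col_elem (sum_list ns) J (\<lambda>a. of_nat r * w a))"
proof (induct r)
  case 0
  show ?case using rep by (simp add: rep_M_def col_elem_zero)
next
  case (Suc r)
  let ?g = "col_elem (sum_list ns) J"
  have M: "?g w \<in> Mprime ns" "?g (\<lambda>a. of_nat r * w a) \<in> Mprime ns"
    using col_elem_in_Uset w block_column_scale[OF w] Uset_subset_Mprime by blast+
  have "act (?g w) ^^ Suc r = act (?g w) \<circ> act (?g (\<lambda>a. of_nat r * w a))" using Suc by simp
  also have "\<dots> = act (mat_mul (sum_list ns) (?g w) (?g (\<lambda>a. of_nat r * w a)))"
    using rep M by (simp add: rep_M_def)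
  also have "\<dots> = act (?g (\<lambda>a. of_nat (Suc r) * w a))" by (simp only: col_elem_power_mult[OF J w])
  finally show ?case .
qed

lemma character_col_elem_power:
  assumes nz: "\<forall>g\<in>Uset ns. \<theta> g \<noteq> 0"
    and mult: "\<forall>g\<in>Uset ns. \<forall>h\<in>Uset ns. \<theta> (mat_mul (sum_list ns) g h) = \<theta> g * \<theta> h"
    and J: "J < sum_list ns" and w: "block_column ns J w"
  shows "\<theta> (col_elem (sum_list ns) J w) ^ r
    = (\<theta> (col_elem (sum_list ns) J (\<lambda>a. of_nat r * w a)) :: 'k::field)"
proof (induct r)
  case 0
  show ?case using character_one[OF nz mult] by (simp add: col_elem_zero)
next
  case (Suc r)
  let ?g = "col_elem (sum_list ns) J"
  have U: "?g w \<in> Uset ns" "?g (\<lambda>a. of_nat r * w a) \<in> Uset ns"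
    using col_elem_in_Uset w block_column_scale[OF w] by blast+
  have "\<theta> (?g w) ^ Suc r = \<theta> (?g w) * \<theta> (?g (\<lambda>a. of_nat r * w a))" using Suc by simp
  also have "\<dots> = \<theta> (mat_mul (sum_list ns) (?g w) (?g (\<lambda>a. of_nat r * w a)))" using mult U by simp
  also have "\<dots> = \<theta> (?g (\<lambda>a. of_nat (Suc r) * w a))" by (simp only: col_elem_power_mult[OF J w])
  finally show ?case .
qed

lemma col_elem_p_power_near_one:
  assumes F: "nonarch_local_field absv p" and \<epsilon>: "0 < \<epsilon>"
  shows "\<exists>N. \<forall>i<n. \<forall>j<n. absv (col_elem n J (\<lambda>a. of_nat (p ^ N) * w a) i j - mat_one n i j) < \<epsilon>"
proof -
  have mult: "\<And>x y. absv (x * y) = absv x * absv y" and zero: "\<And>x. absv x = 0 \<longleftrightarrow> x = 0"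
    and nonneg: "\<And>x. 0 \<le> absv x" and p: "absv (of_nat p) < 1"
    using F by (auto simp: nonarch_local_field_def)
  have one: "absv 1 = 1" using mult[of 1 1] zero[of 1] by simp
  have power: "absv (x ^ N) = absv x ^ N" for x N by (induct N) (simp_all add: one mult)
  define M where "M = (\<Sum>i<n. absv (w i)) + 1"
  have M: "0 < M" "\<And>i. i < n \<Longrightarrow> absv (w i) \<le> M"
    using nonneg member_le_sum[of _ "{..<n}" "\<lambda>i. absv (w i)"]
    by (force simp: M_def add_nonneg_pos sum_nonneg)+
  obtain N where N: "absv (of_nat p) ^ N < \<epsilon> / M" using real_arch_pow_inv \<epsilon> M(1) p by force
  have "absv (of_nat (p ^ N) * w i) < \<epsilon>" if "i < n" for i
  proof -
    have "absv (of_nat (p ^ N) * w i) = absv (of_nat p) ^ N * absv (w i)" by (simp add: mult power)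
    also have "\<dots> \<le> absv (of_nat p) ^ N * M" using M(2)[OF that] nonneg by (simp add: mult_left_mono)
    also have "\<dots> < \<epsilon>" using N M(1) by (simp add: pos_less_divide_eq)
    finally show ?thesis .
  qed
  moreover have "absv 0 = 0" using zero by simp
  ultimately show ?thesis using \<epsilon> by (auto simp: col_elem_def intro!: exI[of _ N])
qed

lemma colgroup_mult:
  assumes J: "J < sum_list ns" and "g \<in> colgroup ns J" "h \<in> colgroup ns J"
  shows "mat_mul (sum_list ns) g h \<in> colgroup ns J"
    and "mat_mul (sum_list ns) g h = mat_mul (sum_list ns) h g"
proof -
  obtain v w where v: "block_column ns J v" "g = col_elem (sum_list ns) J v"
    and w: "block_column ns J w" "h = col_elem (sum_list ns) J w"
    using assms unfolding colgroup_eq_col_elem_image[OF J] by blast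
  show "mat_mul (sum_list ns) g h \<in> colgroup ns J"
    using col_elem_mult[OF J v(1) w(1)] block_column_add[OF v(1) w(1)]
    by (simp add: v(2) w(2) colgroup_eq_col_elem_image[OF J])
  show "mat_mul (sum_list ns) g h = mat_mul (sum_list ns) h g"
    using col_elem_mult[OF J v(1) w(1)] col_elem_mult[OF J w(1) v(1)]
    by (simp add: v(2) w(2) add.commute)
qed

text \<open>Smoothness makes \<open>g\<^bsup>p\<^sup>N\<^esup>\<close> act trivially on a given vector, and \<open>p\<close> is invertible in \<open>k\<close>.\<close>
lemma colgroup_torsion:
  fixes sv :: "'k::field \<Rightarrow> 'v::ab_group_add \<Rightarrow> 'v" and tau :: "'f::field mat \<Rightarrow> 'v \<Rightarrow> 'v"
  assumes F: "nonarch_local_field absv p" and p: "of_nat p \<noteq> (0::'k)"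
    and tau: "smooth_representation absv ns sv tau" and \<theta>: "nondeg_character absv ns \<theta>"
    and J: "J < sum_list ns" and g: "g \<in> colgroup ns J"
  shows "\<exists>r. of_nat r \<noteq> (0::'k) \<and> (tau g ^^ r) a = sv (\<theta> g ^ r) a"
proof -
  let ?n = "sum_list ns"
  have rep: "rep_M ns sv tau" using tau by (simp add: smooth_representation_def)
  then interpret vector_space sv by (simp add: rep_M_def)
  have nz: "\<forall>g\<in>Uset ns. \<theta> g \<noteq> 0"
    and mult: "\<forall>g\<in>Uset ns. \<forall>h\<in>Uset ns. \<theta> (mat_mul ?n g h) = \<theta> g * \<theta> h"
    using \<theta> by (auto simp: nondeg_character_def Let_def)
  obtain w where w: "block_column ns J w" and g_eq: "g = col_elem ?n J w"
    using g unfolding colgroup_eq_col_elem_image[OF J] by blast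
  obtain \<epsilon>1 where \<epsilon>1: "\<epsilon>1 > 0" "\<forall>h\<in>Mprime ns.
      (\<forall>i<?n. \<forall>j<?n. absv (h i j - mat_one ?n i j) < \<epsilon>1) \<longrightarrow> tau h a = a"
    using tau unfolding smooth_representation_def by blast
  obtain \<epsilon>2 where \<epsilon>2: "\<epsilon>2 > 0" "\<forall>h\<in>Uset ns.
      (\<forall>i<?n. \<forall>j<?n. absv (h i j - mat_one ?n i j) < \<epsilon>2) \<longrightarrow> \<theta> h = 1"
    using \<theta> unfolding nondeg_character_def Let_def by blast
  obtain N where N: "\<forall>i<?n. \<forall>j<?n.
      absv (col_elem ?n J (\<lambda>a. of_nat (p ^ N) * w a) i j - mat_one ?n i j) < min \<epsilon>1 \<epsilon>2"
    using col_elem_p_power_near_one[OF F] \<epsilon>1(1) \<epsilon>2(1) by (metis min_less_iff_conj)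
  let ?h = "col_elem ?n J (\<lambda>a. of_nat (p ^ N) * w a)"
  have h: "?h \<in> Uset ns" using col_elem_in_Uset[OF block_column_scale[OF w]] .
  have "(tau g ^^ p ^ N) a = tau ?h a" using rep_col_elem_power[OF rep J w] by (simp add: g_eq)
  also have "\<dots> = a" using \<epsilon>1(2) subsetD[OF Uset_subset_Mprime h] N by simp
  also have "\<dots> = sv (\<theta> ?h) a" using \<epsilon>2(2) h N by simp
  also have "\<theta> ?h = \<theta> g ^ p ^ N" using character_col_elem_power[OF nz mult J w] by (simp add: g_eq)
  finally show ?thesis using p by (intro exI[of _ "p ^ N"]) simp
qed

lemma colgroup_tame_abelian:
  fixes sv :: "'k::field \<Rightarrow> 'v::ab_group_add \<Rightarrow> 'v" and tau :: "'f::field mat \<Rightarrow> 'v \<Rightarrow> 'v"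
  assumes F: "nonarch_local_field absv p" and p: "of_nat p \<noteq> (0::'k)"
    and tau: "smooth_representation absv ns sv tau" and \<theta>: "nondeg_character absv ns \<theta>"
    and J: "J < sum_list ns"
  shows "twisted_action.tame_abelian sv tau \<theta> (colgroup ns J)"
proof -
  let ?n = "sum_list ns"
  have rep: "rep_M ns sv tau" using tau by (simp add: smooth_representation_def)
  then interpret twisted_action sv tau \<theta> by (simp add: twisted_action_def rep_M_def)
  have U: "colgroup ns J \<subseteq> (Uset ns :: 'f mat set)" by (auto simp: colgroup_def)
  then have M: "colgroup ns J \<subseteq> (Mprime ns :: 'f mat set)"
    using Uset_subset_Mprime by (rule order_trans)
  have hom: "tau (mat_mul ?n g h) = tau g \<circ> tau h" "\<theta> (mat_mul ?n g h) = \<theta> g * \<theta> h"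
    if "g \<in> colgroup ns J" "h \<in> colgroup ns J" for g h :: "'f mat"
    using that rep \<theta> U M unfolding rep_M_def nondeg_character_def Let_def by blast+
  show ?thesis
    unfolding tame_abelian_def
  proof (intro conjI ballI allI)
    fix g :: "'f mat" assume g: "g \<in> colgroup ns J"
    show "linear_endo (tau g)" using rep M g by (auto simp: rep_M_def)
    show "\<theta> g \<noteq> 0" using \<theta> U g by (auto simp: nondeg_character_def Let_def)
    fix h :: "'f mat" assume h: "h \<in> colgroup ns J"
    show "\<exists>k\<in>colgroup ns J. tau g \<circ> tau h = tau k \<and> \<theta> k = \<theta> g * \<theta> h"
      using colgroup_mult(1)[OF J g h] hom[OF g h] by metis
    show "tau g \<circ> tau h = tau h \<circ> tau g"
      using colgroup_mult(2)[OF J g h] hom(1)[OF g h] hom(1)[OF h g] by simp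
  next
    fix g :: "'f mat" and a assume "g \<in> colgroup ns J"
    then show "\<exists>r. of_nat r \<noteq> (0::'k) \<and> (tau g ^^ r) a = sv (\<theta> g ^ r) a"
      using colgroup_torsion[OF F p tau \<theta> J] by blast
  qed
qed

lemma colgroup_normalizes:
  fixes sv :: "'k::field \<Rightarrow> 'v::ab_group_add \<Rightarrow> 'v" and tau :: "'f::field mat \<Rightarrow> 'v \<Rightarrow> 'v"
    and \<theta> :: "'f mat \<Rightarrow> 'k"
  assumes rep: "rep_M ns sv tau" and \<theta>: "nondeg_character absv ns \<theta>"
    and jJ: "j < J" and J: "J < sum_list ns"
  shows "twisted_action.normalizes tau \<theta> (colgroup ns j) (colgroup ns J)"
proof -
  interpret twisted_action sv tau \<theta> using rep by (simp add: twisted_action_def rep_M_def)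
  let ?n = "sum_list ns"
  have "\<exists>g'\<in>colgroup ns J. tau h \<circ> tau g = tau g' \<circ> tau h \<and> \<theta> g' = \<theta> g"
    if h: "h \<in> colgroup ns j" and g: "g \<in> colgroup ns J" for h g :: "'f mat"
  proof -
    obtain v w where v: "block_column ns j v" "h = col_elem ?n j v"
      and w: "block_column ns J w" "g = col_elem ?n J w"
      using h g
      unfolding colgroup_eq_col_elem_image[OF J]
        colgroup_eq_col_elem_image[OF order.strict_trans[OF jJ J]]
      by blast
    define g' where "g' = col_elem ?n J (\<lambda>a. w a + w j * v a)"
    have g': "g' \<in> colgroup ns J"
      using block_column_conj[OF jJ v(1) w(1)]
      unfolding g'_def colgroup_eq_col_elem_image[OF J] by blast
    have conj: "mat_mul ?n h g = mat_mul ?n g' h"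
      unfolding v(2) w(2) g'_def by (rule col_elem_conj[OF jJ J v(1) w(1)])
    have U: "h \<in> Uset ns" "g \<in> Uset ns" "g' \<in> Uset ns" using h g g' by (auto simp: colgroup_def)
    then have M: "h \<in> Mprime ns" "g \<in> Mprime ns" "g' \<in> Mprime ns" using Uset_subset_Mprime by blast+
    have "tau h \<circ> tau g = tau g' \<circ> tau h" using rep M conj unfolding rep_M_def by metis
    moreover have "\<theta> g' = \<theta> g"
    proof -
      have "\<theta> h * \<theta> g = \<theta> g' * \<theta> h" using \<theta> U conj unfolding nondeg_character_def Let_def by metis
      moreover have "\<theta> h \<noteq> 0" using \<theta> U unfolding nondeg_character_def Let_def by blast
      ultimately show ?thesis by simp
    qed
    ultimately show ?thesis using g' by blast
  qed
  then show ?thesis unfolding normalizes_def by blast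
qed

lemma Nset_eq_colgroup:
  assumes s: "s < length ns" and j: "1 \<le> j" "j \<le> ns ! s"
  shows "Nset ns s j = colgroup ns (offs ns s + j - 1)"
proof (intro equalityI subsetI)
  fix g assume "g \<in> Nset ns s j"
  then show "g \<in> colgroup ns (offs ns s + j - 1)" by (simp add: Nset_def colgroup_def)
next
  let ?J = "offs ns s + j - 1"
  fix g assume g: "g \<in> colgroup ns ?J"
  obtain j' where "j = Suc j'" using j(1) by (cases j) auto
  then have J: "in_block ns ?J s" using s j(2) by (simp add: in_block_def)
  have col: "\<forall>a b. a \<noteq> b \<and> g a b \<noteq> 0 \<longrightarrow> b = ?J" and U: "g \<in> Uset ns"
    using g by (simp_all add: colgroup_def)
  have "offs ns s \<le> a" if ab: "a \<noteq> b" "g a b \<noteq> 0" for a b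
  proof -
    obtain s' where a: "in_block ns a s'" and b: "in_block ns b s'"
      using U ab(2) unfolding Uset_def block_diag_def by blast
    have "b = ?J" using col ab by blast
    with b have "s = s'" using in_block_unique[OF J] by simp
    with a show ?thesis by (simp add: in_block_def)
  qed
  with col U show "g \<in> Nset ns s j" unfolding Nset_def by blast
qed

definition deriv_columns :: "nat list \<Rightarrow> nat list" where
  "deriv_columns ns =
     concat (map (\<lambda>s. map (\<lambda>j. offs ns s + j - 1) (rev [2..<Suc (ns ! s)])) (rev [0..<length ns]))"

lemma deriv_groups_eq_colgroups: "deriv_groups ns = map (colgroup ns) (deriv_columns ns)"
  unfolding deriv_groups_def deriv_columns_def map_concat map_map o_def
proof (intro arg_cong[where f = concat] map_cong refl)
  fix s j assume "s \<in> set (rev [0..<length ns])" "j \<in> set (rev [2..<Suc (ns ! s)])"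
  then have "s < length ns" "1 \<le> j" "j \<le> ns ! s" by auto
  then show "Nset ns s j = colgroup ns (offs ns s + j - 1)" by (rule Nset_eq_colgroup)
qed

lemma deriv_columns_sorted_less:
  "sorted_wrt (>) (deriv_columns ns) \<and> (\<forall>J\<in>set (deriv_columns ns). J < sum_list ns)"
proof -
  define cols where "cols s = map (\<lambda>j. offs ns s + j - 1) (rev [2..<Suc (ns ! s)])" for s
  define L where "L m = concat (map cols (rev [0..<m]))" for m
  have "sorted_wrt (>) (L m) \<and> (\<forall>J\<in>set (L m). J < offs ns m)" if "m \<le> length ns" for m
    using that
  proof (induct m)
    case 0
    show ?case by (simp add: L_def)
  next
    case (Suc m)
    have L: "L (Suc m) = cols m @ L m" by (simp add: L_def)
    have IH: "sorted_wrt (>) (L m)" "\<forall>J\<in>set (L m). J < offs ns m" using Suc by auto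
    have sorted: "sorted_wrt (>) (cols m)"
      unfolding cols_def sorted_wrt_map sorted_wrt_rev
      by (rule sorted_wrt_mono_rel[OF _ sorted_wrt_upt]) auto
    have bounds: "offs ns m < J" "J < offs ns (Suc m)" if J: "J \<in> set (cols m)" for J
    proof -
      obtain j where "2 \<le> j" "j \<le> ns ! m" "J = offs ns m + j - 1" using J by (auto simp: cols_def)
      then show "offs ns m < J" "J < offs ns (Suc m)" using Suc.prems by (simp_all add: offs_Suc)
    qed
    have "offs ns m \<le> offs ns (Suc m)" by (rule offs_mono) simp
    then have "\<forall>J\<in>set (cols m @ L m). J < offs ns (Suc m)"
      using IH(2) bounds(2) by (auto intro: order_less_le_trans)
    moreover have "\<forall>x\<in>set (cols m). \<forall>y\<in>set (L m). y < x"
      using IH(2) bounds(1) by (blast intro: order_less_trans)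
    ultimately show ?case using IH(1) sorted by (simp add: L sorted_wrt_append)
  qed
  from this[of "length ns"]
  have "sorted_wrt (>) (L (length ns))" "\<forall>J\<in>set (L (length ns)). J < offs ns (length ns)"
    by simp_all
  moreover have "deriv_columns ns = L (length ns)" unfolding deriv_columns_def L_def cols_def ..
  moreover have "offs ns (length ns) = sum_list ns" by (simp add: offs_def)
  ultimately show ?thesis by simp
qed

subsection \<open>Derivatives of subquotients\<close>

lemma deriv_groups_subset_Mprime: "\<Union>(set (deriv_groups ns)) \<subseteq> Mprime ns"
  using Uset_subset_Mprime by (auto simp: deriv_groups_eq_colgroups colgroup_def)

lemma derivative_kernel_Int_stable:
  fixes sv :: "'k::field \<Rightarrow> 'v::ab_group_add \<Rightarrow> 'v" and tau :: "'f::field mat \<Rightarrow> 'v \<Rightarrow> 'v"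
  assumes F: "nonarch_local_field absv p" and p: "of_nat p \<noteq> (0::'k)"
    and tau: "smooth_representation absv ns sv tau" and \<theta>: "nondeg_character absv ns \<theta>"
    and W: "module.subspace sv W" "\<forall>g\<in>Mprime ns. tau g ` W \<subseteq> W"
  shows "W \<inter> deriv_kernel sv tau \<theta> (deriv_groups ns)
    \<subseteq> module.span sv (twisted_action.twisted_diffs sv tau \<theta> (\<Union>(set (deriv_groups ns))) W)"
proof -
  have rep: "rep_M ns sv tau" using tau by (simp add: smooth_representation_def)
  then have vs: "vector_space sv" by (simp add: rep_M_def)
  interpret twisted_action sv tau \<theta> using vs by (simp add: twisted_action_def)
  let ?Cs = "deriv_groups ns"
  have Cs: "?Cs = map (colgroup ns) (deriv_columns ns)" by (rule deriv_groups_eq_colgroups)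
  have cols: "sorted_wrt (>) (deriv_columns ns)" "\<forall>J\<in>set (deriv_columns ns). J < sum_list ns"
    using deriv_columns_sorted_less by blast+
  have "\<forall>C\<in>set ?Cs. tame_abelian C"
    using cols(2) colgroup_tame_abelian[OF F p tau \<theta>] by (simp add: Cs)
  moreover have "sorted_wrt (\<lambda>C D. normalizes D C) ?Cs"
    unfolding Cs sorted_wrt_map
    using cols colgroup_normalizes[OF rep \<theta>] by (auto intro: sorted_wrt_mono_rel[OF _ cols(1)])
  moreover have "\<Union>(set ?Cs) \<subseteq> Mprime ns" by (rule deriv_groups_subset_Mprime)
  then have "stable (\<Union>(set ?Cs)) W" "stable (\<Union>(set ?Cs)) {0}"
    using W(2) rep by (auto simp: stable_def rep_M_def endo.linear_0)
  ultimately show ?thesis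
    using normalizing_chain_exact[of ?Cs W "{0}"] W(1) by (simp add: deriv_kernel_eq_span[OF vs])
qed

lemma subquotient_span_twisted_diffs_UNIV:
  fixes sv :: "'k::field \<Rightarrow> 'v::ab_group_add \<Rightarrow> 'v" and sw :: "'k \<Rightarrow> 'w::ab_group_add \<Rightarrow> 'w"
    and tau :: "'f::field mat \<Rightarrow> 'v \<Rightarrow> 'v" and rho :: "'f mat \<Rightarrow> 'w \<Rightarrow> 'w"
  assumes sq: "subquotient ns sv tau sw rho" and vs: "vector_space sv" "vector_space sw"
    and S: "S \<subseteq> Mprime ns"
    and spanned: "\<And>W. module.subspace sv W \<Longrightarrow> \<forall>g\<in>Mprime ns. tau g ` W \<subseteq> W \<Longrightarrow>
      W \<subseteq> module.span sv (twisted_action.twisted_diffs sv tau \<theta> S W)"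
  shows "module.span sw (twisted_action.twisted_diffs sw rho \<theta> S UNIV) = UNIV"
proof -
  obtain W1 \<phi> where W1: "module.subspace sv W1" "\<forall>g\<in>Mprime ns. tau g ` W1 \<subseteq> W1"
    and \<phi>: "\<forall>x\<in>W1. \<forall>y\<in>W1. \<phi> (x + y) = \<phi> x + \<phi> y" "\<forall>c. \<forall>x\<in>W1. \<phi> (sv c x) = sw c (\<phi> x)"
      "\<phi> ` W1 = UNIV" "\<forall>g\<in>Mprime ns. \<forall>x\<in>W1. \<phi> (tau g x) = rho g (\<phi> x)"
    using sq unfolding subquotient_def by (elim exE conjE) blast
  have "UNIV = \<phi> ` W1" using \<phi>(3) by simp
  also have "\<dots> \<subseteq> \<phi> ` module.span sv (twisted_action.twisted_diffs sv tau \<theta> S W1)"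
    using spanned[OF W1] by (rule image_mono)
  also have "\<dots> \<subseteq> module.span sw (twisted_action.twisted_diffs sw rho \<theta> S UNIV)"
    using W1(2) \<phi>(4) S by (intro span_twisted_diffs_image[OF vs W1(1) _ \<phi>(1,2)]) blast+
  finally show ?thesis by blast
qed

theorem proposition4p13:
  fixes absv :: "'f::field \<Rightarrow> real" and p :: nat and ns :: "nat list"
    and sv :: "'k::field \<Rightarrow> 'v::ab_group_add \<Rightarrow> 'v" and tau :: "'f mat \<Rightarrow> 'v \<Rightarrow> 'v"
    and sw :: "'k \<Rightarrow> 'w::ab_group_add \<Rightarrow> 'w" and rho :: "'f mat \<Rightarrow> 'w \<Rightarrow> 'w"
    and \<theta> :: "'f mat \<Rightarrow> 'k"
  assumes "nonarch_local_field absv p"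
    and "alg_closed_field TYPE('k)"
    and "of_nat p \<noteq> (0::'k)"
    and "\<forall>i < length ns. 0 < ns ! i"
    and "smooth_representation absv ns sv tau"
    and "rep_M ns sw rho"
    and "subquotient ns sv tau sw rho"
    and "nondeg_character absv ns \<theta>"
    and "derivative_nonzero ns sw rho \<theta>"
  shows "derivative_nonzero ns sv tau \<theta>"
proof (rule ccontr)
  let ?S = "\<Union>(set (deriv_groups ns))"
  have vsv: "vector_space sv" and vsw: "vector_space sw"
    using assms(5,6) by (simp_all add: smooth_representation_def rep_M_def)
  assume "\<not> derivative_nonzero ns sv tau \<theta>"
  then have "W \<subseteq> module.span sv (twisted_action.twisted_diffs sv tau \<theta> ?S W)"
    if "module.subspace sv W" "\<forall>g\<in>Mprime ns. tau g ` W \<subseteq> W" for W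
    using derivative_kernel_Int_stable[OF assms(1,3,5,8) that] by (simp add: derivative_nonzero_def)
  then have "module.span sw (twisted_action.twisted_diffs sw rho \<theta> ?S UNIV) = UNIV"
    by (rule subquotient_span_twisted_diffs_UNIV[OF assms(7) vsv vsw deriv_groups_subset_Mprime])
  then show False using assms(9) by (simp add: derivative_nonzero_def deriv_kernel_eq_span[OF vsw])
qed

end
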